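(* Let $R$ be a ring, let $T$ be a left denominator set of $R$ with $\mathrm{ass}(T)=0$, and let $\sigma:R\to T^{-1}R$, $r\mapsto\frac{r}{1}$. Then: (1) $T\subseteq S$ for all $S\in\max\mathrm{Den}_l(R)$; (2) the map $\max\mathrm{Den}_l(R)\to\max\mathrm{Den}_l(T^{-1}R)$, $S\mapsto\widetilde{S}$, is a bijection with inverse $\mathcal{T}\mapsto\sigma^{-1}(\mathcal{T})$, where $\widetilde{S}$ is the multiplicative monoid generated in $T^{-1}R$ by $\sigma(S)$ and $\{t^{-1}: t\in T\}$; moreover $S^{-1}R\cong\widetilde{S}^{-1}(T^{-1}R)$.
   Context: All rings are associative with $1$. A multiplicative subset $S$ of $R$ ($1\in S$, $0\notin S$, closed under multiplication) is a left Ore set if $Sr\cap Rs\neq\emptyset$ for all $r\in R$, $s\in S$; for it, $\mathrm{ass}(S):=\{r\in R: sr=0\text{ for some } s\in S\}$. A left Ore set $S$ is a left denominator set if $rs=0$ ($r\in R$, $s\in S$) implies $tr=0$ for some $t\in S$; $S^{-1}R$ is the left localization. $\max\mathrm{Den}_l(R)$ is the set of maximal elements, under inclusion, of the set of left denominator sets of $R$. *)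

theory Defs
  imports Main
begin

definition mult_subset :: "'a::ring_1 set \<Rightarrow> bool" where
  "mult_subset S \<longleftrightarrow> 1 \<in> S \<and> 0 \<notin> S \<and> (\<forall>a\<in>S. \<forall>b\<in>S. a * b \<in> S)"

definition left_ore :: "'a::ring_1 set \<Rightarrow> bool" where
  "left_ore S \<longleftrightarrow> mult_subset S \<and>
     (\<forall>r. \<forall>s\<in>S. \<exists>s'\<in>S. \<exists>r'. s' * r = r' * s)"

definition ass :: "'a::ring_1 set \<Rightarrow> 'a set" where
  "ass S = {r. \<exists>s\<in>S. s * r = 0}"

definition left_den :: "'a::ring_1 set \<Rightarrow> bool" where
  "left_den S \<longleftrightarrow> left_ore S \<and>
     (\<forall>r. \<forall>s\<in>S. r * s = 0 \<longrightarrow> (\<exists>t\<in>S. t * r = 0))"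

definition maxDen_l :: "'a::ring_1 set set" where
  "maxDen_l = {S. left_den S \<and> (\<forall>S'. left_den S' \<and> S \<subseteq> S' \<longrightarrow> S' = S)}"

definition is_ring_hom :: "('a::ring_1 \<Rightarrow> 'b::ring_1) \<Rightarrow> bool" where
  "is_ring_hom f \<longleftrightarrow> f 1 = 1 \<and> (\<forall>x y. f (x + y) = f x + f y) \<and> (\<forall>x y. f (x * y) = f x * f y)"

definition is_unit :: "'a::ring_1 \<Rightarrow> bool" where
  "is_unit u \<longleftrightarrow> (\<exists>v. v * u = 1 \<and> u * v = 1)"

text \<open>sigma : R -> Q is (a model of) the left localization S^{-1}R, r |-> r/1:
  a ring homomorphism sending S to units, every element of Q is a left fraction
  sigma(s)^{-1} sigma(r), and the kernel is ass(S).\<close>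
definition is_left_localization :: "'a::ring_1 set \<Rightarrow> ('a \<Rightarrow> 'b::ring_1) \<Rightarrow> bool" where
  "is_left_localization S \<sigma> \<longleftrightarrow> left_den S \<and> is_ring_hom \<sigma> \<and>
     (\<forall>s\<in>S. is_unit (\<sigma> s)) \<and>
     (\<forall>q. \<exists>s\<in>S. \<exists>r. \<sigma> s * q = \<sigma> r) \<and>
     {r. \<sigma> r = 0} = ass S"

inductive_set monoid_gen :: "'a::monoid_mult set \<Rightarrow> 'a set" for A where
  one: "1 \<in> monoid_gen A"
| gen: "a \<in> A \<Longrightarrow> a \<in> monoid_gen A"
| mult: "a \<in> monoid_gen A \<Longrightarrow> b \<in> monoid_gen A \<Longrightarrow> a * b \<in> monoid_gen A"

definition tilde :: "'a::ring_1 set \<Rightarrow> ('a \<Rightarrow> 'b::ring_1) \<Rightarrow> 'a set \<Rightarrow> 'b set" where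
  "tilde T \<sigma> S = monoid_gen (\<sigma> ` S \<union> {u. \<exists>t\<in>T. u * \<sigma> t = 1 \<and> \<sigma> t * u = 1})"

end

theory Submission
  imports Defs
begin

text \<open>A maximal left denominator set \<open>S\<close> contains every element that satisfies the left Ore
  condition with respect to \<open>S\<close> and is right regular modulo \<open>ass S\<close>, because these elements
  form a left denominator set containing \<open>S\<close>. Consequently \<open>S\<close> is saturated, contains all
  units, and absorbs any left denominator set \<open>T\<close> with \<open>ass T \<subseteq> ass S\<close>; for
  \<open>ass T = 0\<close> this gives \<open>T \<subseteq> S\<close>.

  Then \<open>\<sigma>\<close> is injective and every element of \<open>T\<^sup>-\<^sup>1R\<close> is a fraction
  \<open>\<sigma>(t)\<^sup>-\<^sup>1\<sigma>(r)\<close>. Using \<open>T \<subseteq> S\<close> and saturation, \<open>S\<close>-tilde is exactly the set of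
  fractions \<open>\<sigma>(t)\<^sup>-\<^sup>1\<sigma>(s)\<close> with \<open>s \<in> S\<close>; it is a maximal left denominator set whose
  preimage under \<open>\<sigma>\<close> is \<open>S\<close>. Conversely, preimages of left denominator sets containing
  \<open>\<sigma>(T)\<close> are left denominator sets, and maximal ones contain the units \<open>\<sigma>(T)\<close>, so the two
  constructions are mutually inverse. Finally \<open>R \<rightarrow> T\<^sup>-\<^sup>1R \<rightarrow> S\<close>-tilde\<open>\<^sup>-\<^sup>1(T\<^sup>-\<^sup>1R)\<close>
  has the defining properties of \<open>S\<^sup>-\<^sup>1R\<close>, which is unique up to isomorphism by its
  universal property.\<close>

lemma ring_hom_one: "is_ring_hom f \<Longrightarrow> f 1 = 1"
  by (simp add: is_ring_hom_def)

lemma ring_hom_add: "is_ring_hom f \<Longrightarrow> f (x + y) = f x + f y"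
  by (simp add: is_ring_hom_def)

lemma ring_hom_mult: "is_ring_hom f \<Longrightarrow> f (x * y) = f x * f y"
  by (simp add: is_ring_hom_def)

lemma ring_hom_zero: "is_ring_hom f \<Longrightarrow> f 0 = 0"
  using ring_hom_add[of f 0 0] by simp

lemma ring_hom_diff: "is_ring_hom f \<Longrightarrow> f (x - y) = f x - f y"
  using ring_hom_add[of f "x - y" y] by (simp add: eq_diff_eq)

lemma ring_hom_comp: "is_ring_hom f \<Longrightarrow> is_ring_hom g \<Longrightarrow> is_ring_hom (g \<circ> f)"
  by (simp add: is_ring_hom_def)

definition unit_inv :: "'a::ring_1 \<Rightarrow> 'a" where
  "unit_inv u = (SOME v. v * u = 1 \<and> u * v = 1)"

lemma unit_inv: "is_unit u \<Longrightarrow> unit_inv u * u = 1 \<and> u * unit_inv u = 1"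
  unfolding unit_inv_def is_unit_def by (rule someI_ex)

lemma unit_inv_left: "is_unit u \<Longrightarrow> unit_inv u * u = 1"
  using unit_inv by blast

lemma unit_inv_right: "is_unit u \<Longrightarrow> u * unit_inv u = 1"
  using unit_inv by blast

lemma is_unit_cancel_left: "is_unit a \<Longrightarrow> a * x = a * y \<Longrightarrow> x = y"
  unfolding is_unit_def by (metis mult.assoc mult_1_left)

lemma left_denI:
  assumes "1 \<in> S" and "0 \<notin> S" and "\<And>a b. a \<in> S \<Longrightarrow> b \<in> S \<Longrightarrow> a * b \<in> S"
    and "\<And>r s. s \<in> S \<Longrightarrow> \<exists>s'\<in>S. \<exists>r'. s' * r = r' * s"
    and "\<And>r s. s \<in> S \<Longrightarrow> r * s = 0 \<Longrightarrow> \<exists>t\<in>S. t * r = 0"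
  shows "left_den S"
  using assms by (simp add: left_den_def left_ore_def mult_subset_def)

lemma left_den_one: "left_den S \<Longrightarrow> 1 \<in> S"
  by (simp add: left_den_def left_ore_def mult_subset_def)

lemma left_den_zero_notin: "left_den S \<Longrightarrow> 0 \<notin> S"
  by (simp add: left_den_def left_ore_def mult_subset_def)

lemma left_den_mult: "left_den S \<Longrightarrow> a \<in> S \<Longrightarrow> b \<in> S \<Longrightarrow> a * b \<in> S"
  by (simp add: left_den_def left_ore_def mult_subset_def)

lemma left_den_ore: "left_den S \<Longrightarrow> s \<in> S \<Longrightarrow> \<exists>s'\<in>S. \<exists>r'. s' * r = r' * s"
  by (simp add: left_den_def left_ore_def)

lemma left_den_annihilator: "left_den S \<Longrightarrow> s \<in> S \<Longrightarrow> r * s = 0 \<Longrightarrow> \<exists>t\<in>S. t * r = 0"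
  unfolding left_den_def by blast

lemma zero_in_ass: "left_den S \<Longrightarrow> 0 \<in> ass S"
  unfolding ass_def using left_den_one by fastforce

lemma one_notin_ass: "left_den S \<Longrightarrow> 1 \<notin> ass S"
  unfolding ass_def using left_den_zero_notin by fastforce

lemma ass_mult_right: "x \<in> ass S \<Longrightarrow> x * y \<in> ass S"
  unfolding ass_def by (auto, metis mult.assoc mult_zero_left)

lemma ass_left_cancel:
  assumes "left_den S" and "s \<in> S" and "s * x \<in> ass S"
  shows "x \<in> ass S"
proof -
  obtain t where t: "t \<in> S" "(t * s) * x = 0"
    using assms(3) by (auto simp: ass_def mult.assoc)
  moreover have "t * s \<in> S" using left_den_mult[OF assms(1) t(1) assms(2)] .
  ultimately show ?thesis unfolding ass_def by blast
qed

lemma ass_right_cancel: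
  assumes S: "left_den S" and "s \<in> S" and "x * s \<in> ass S"
  shows "x \<in> ass S"
proof -
  obtain t where t: "t \<in> S" "(t * x) * s = 0"
    using assms(3) by (auto simp: ass_def mult.assoc)
  then have "t * x \<in> ass S"
    using left_den_annihilator[OF S \<open>s \<in> S\<close>] unfolding ass_def by blast
  then show ?thesis using ass_left_cancel[OF S t(1)] by blast
qed

lemma monoid_gen_least:
  assumes "A \<subseteq> M" and "1 \<in> M" and "\<And>a b. a \<in> M \<Longrightarrow> b \<in> M \<Longrightarrow> a * b \<in> M"
  shows "monoid_gen A \<subseteq> M"
proof
  show "x \<in> M" if "x \<in> monoid_gen A" for x
    using that by induction (use assms in blast)+
qed

lemma monoid_gen_mono: "A \<subseteq> B \<Longrightarrow> monoid_gen A \<subseteq> monoid_gen B"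
  by (rule monoid_gen_least) (auto intro: monoid_gen.intros)

lemma monoid_gen_ore:
  assumes gen: "\<And>a r. a \<in> A \<Longrightarrow> \<exists>s\<in>monoid_gen A. \<exists>r'. s * r = r' * a"
    and v: "v \<in> monoid_gen A"
  shows "\<exists>s\<in>monoid_gen A. \<exists>r'. s * r = r' * v"
  using v
proof (induction arbitrary: r)
  case one
  show ?case using monoid_gen.one by (metis mult_1_right)
next
  case (gen a)
  then show ?case using assms(1) by blast
next
  case (mult a b)
  obtain s1 r1 where s1: "s1 \<in> monoid_gen A" "s1 * r = r1 * b" using mult.IH(2) by blast
  obtain s2 r2 where s2: "s2 \<in> monoid_gen A" "s2 * r1 = r2 * a" using mult.IH(1) by blast
  have "(s2 * s1) * r = r2 * (a * b)" using s1 s2 by (metis mult.assoc)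
  then show ?case using monoid_gen.mult[OF s2(1) s1(1)] by blast
qed

lemma monoid_gen_annihilator:
  assumes gen: "\<And>a r. a \<in> A \<Longrightarrow> r * a = 0 \<Longrightarrow> \<exists>t\<in>monoid_gen A. t * r = 0"
    and v: "v \<in> monoid_gen A"
  shows "r * v = 0 \<Longrightarrow> \<exists>t\<in>monoid_gen A. t * r = 0"
  using v
proof (induction arbitrary: r)
  case one
  then show ?case using monoid_gen.one by force
next
  case (gen a)
  then show ?case using assms(1) by blast
next
  case (mult a b)
  obtain t where t: "t \<in> monoid_gen A" "(t * r) * a = 0"
    using mult.IH(2)[of "r * a"] mult.prems by (auto simp: mult.assoc)
  obtain t' where t': "t' \<in> monoid_gen A" "t' * (t * r) = 0"
    using mult.IH(1)[OF t(2)] by blast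
  show ?case using monoid_gen.mult[OF t'(1) t(1)] t'(2) by (metis mult.assoc)
qed

lemma monoid_gen_right_cancel:
  assumes gen: "\<And>a x. a \<in> A \<Longrightarrow> x * a \<in> I \<Longrightarrow> x \<in> I"
    and v: "v \<in> monoid_gen A"
  shows "x * v \<in> I \<Longrightarrow> x \<in> I"
  using v
proof (induction arbitrary: x)
  case (mult a b)
  then show ?case by (metis mult.assoc)
qed (use gen in simp_all)

text \<open>\<open>I\<close> plays the role of \<open>ass\<close> of the monoid to be constructed; knowing its right
  cancellation property in advance is what keeps \<open>0\<close> out of the monoid.\<close>

lemma left_den_monoid_gen:
  fixes A :: "'a::ring_1 set"
  assumes ore: "\<And>a r. a \<in> A \<Longrightarrow> \<exists>s\<in>monoid_gen A. \<exists>r'. s * r = r' * a"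
    and ann: "\<And>a r. a \<in> A \<Longrightarrow> r * a = 0 \<Longrightarrow> \<exists>t\<in>monoid_gen A. t * r = 0"
    and cancel: "\<And>a x. a \<in> A \<Longrightarrow> x * a \<in> I \<Longrightarrow> x \<in> I"
    and "0 \<in> I" and "1 \<notin> I"
  shows "left_den (monoid_gen A)"
proof (rule left_denI)
  show "0 \<notin> monoid_gen A"
    using monoid_gen_right_cancel[OF cancel, where x = 1 and v = 0] assms(4,5) by auto
next
  show "\<exists>s'\<in>monoid_gen A. \<exists>r'. s' * r = r' * s" if "s \<in> monoid_gen A" for r s
    using monoid_gen_ore[OF ore that] .
next
  show "\<exists>t\<in>monoid_gen A. t * r = 0" if "s \<in> monoid_gen A" "r * s = 0" for r s
    using monoid_gen_annihilator[OF ann that] .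
qed (fact monoid_gen.intros)+

lemma maxDen_l_left_den: "S \<in> maxDen_l \<Longrightarrow> left_den S"
  by (simp add: maxDen_l_def)

lemma maxDen_l_eq: "S \<in> maxDen_l \<Longrightarrow> left_den S' \<Longrightarrow> S \<subseteq> S' \<Longrightarrow> S' = S"
  by (simp add: maxDen_l_def)

lemma maxDen_lI:
  "left_den S \<Longrightarrow> (\<And>S'. left_den S' \<Longrightarrow> S \<subseteq> S' \<Longrightarrow> S' \<subseteq> S) \<Longrightarrow> S \<in> maxDen_l"
  unfolding maxDen_l_def by blast

text \<open>The elements with these two properties form a left denominator set containing \<open>S\<close>,
  which by maximality is \<open>S\<close> itself.\<close>

lemma maxDen_l_memI:
  assumes M: "S \<in> maxDen_l"
    and ore: "\<And>r. \<exists>s\<in>S. \<exists>r'. s * r = r' * a"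
    and regular: "\<And>x. x * a \<in> ass S \<Longrightarrow> x \<in> ass S"
  shows "a \<in> S"
proof -
  define G where
    "G = {a. (\<forall>r. \<exists>s\<in>S. \<exists>r'. s * r = r' * a) \<and> (\<forall>x. x * a \<in> ass S \<longrightarrow> x \<in> ass S)}"
  have S: "left_den S" using M by (rule maxDen_l_left_den)
  have SG: "S \<subseteq> G" unfolding G_def using left_den_ore[OF S] ass_right_cancel[OF S] by blast
  have G_ore: "\<exists>s\<in>S. \<exists>r'. s * r = r' * g" if "g \<in> G" for g r
    using that unfolding G_def by blast
  have G_regular: "x \<in> ass S" if "g \<in> G" "x * g \<in> ass S" for g x
    using that unfolding G_def by blast
  have "left_den G"
  proof (rule left_denI)
    show "1 \<in> G" using SG left_den_one[OF S] by blast
    show "0 \<notin> G"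
      using G_regular[of 0 1] zero_in_ass[OF S] one_notin_ass[OF S] by auto
  next
    fix a b assume a: "a \<in> G" and b: "b \<in> G"
    have "\<exists>s\<in>S. \<exists>r'. s * r = r' * (a * b)" for r
    proof -
      obtain s1 r1 where s1: "s1 \<in> S" "s1 * r = r1 * b" using G_ore[OF b] by blast
      obtain s2 r2 where s2: "s2 \<in> S" "s2 * r1 = r2 * a" using G_ore[OF a] by blast
      have "(s2 * s1) * r = r2 * (a * b)" using s1 s2 by (metis mult.assoc)
      then show ?thesis using left_den_mult[OF S s2(1) s1(1)] by blast
    qed
    moreover have "x \<in> ass S" if "x * (a * b) \<in> ass S" for x
      using G_regular[OF a] G_regular[OF b] that by (metis mult.assoc)
    ultimately show "a * b \<in> G" unfolding G_def by blast
  next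
    fix r s assume "s \<in> G"
    then show "\<exists>s'\<in>G. \<exists>r'. s' * r = r' * s" using G_ore SG by blast
  next
    fix r s assume "s \<in> G" and "r * s = 0"
    then have "r \<in> ass S" using G_regular zero_in_ass[OF S] by simp
    then show "\<exists>t\<in>G. t * r = 0" using SG unfolding ass_def by blast
  qed
  then have "G = S" using maxDen_l_eq[OF M] SG by blast
  moreover have "a \<in> G" unfolding G_def using ore regular by blast
  ultimately show ?thesis by simp
qed

lemma maxDen_l_cancel_right:
  assumes M: "S \<in> maxDen_l" and "b \<in> S" and "x * b \<in> S"
  shows "x \<in> S"
proof (rule maxDen_l_memI[OF M])
  have S: "left_den S" using M by (rule maxDen_l_left_den)
  fix r
  obtain s r' where s: "s \<in> S" "s * (r * b) = r' * (x * b)"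
    using left_den_ore[OF S \<open>x * b \<in> S\<close>] by blast
  then have "(s * r - r' * x) * b = 0" by (simp add: algebra_simps)
  then obtain s' where s': "s' \<in> S" "s' * (s * r - r' * x) = 0"
    using left_den_annihilator[OF S \<open>b \<in> S\<close>] by blast
  then have "(s' * s) * r = (s' * r') * x" by (simp add: algebra_simps)
  then show "\<exists>s\<in>S. \<exists>r'. s * r = r' * x" using left_den_mult[OF S s'(1) s(1)] by blast
next
  fix y assume "y * x \<in> ass S"
  then have "y * (x * b) \<in> ass S" using ass_mult_right by (metis mult.assoc)
  then show "y \<in> ass S" using ass_right_cancel[OF maxDen_l_left_den[OF M] \<open>x * b \<in> S\<close>] by blast
qed

lemma maxDen_l_cancel_left:
  assumes M: "S \<in> maxDen_l" and "b \<in> S" and "b * r \<in> S"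
  shows "r \<in> S"
proof (rule maxDen_l_memI[OF M])
  have S: "left_den S" using M by (rule maxDen_l_left_den)
  fix y
  obtain s z where "s \<in> S" "s * y = z * (b * r)" using left_den_ore[OF S \<open>b * r \<in> S\<close>] by blast
  then have "s \<in> S" "s * y = (z * b) * r" by (simp_all add: mult.assoc)
  then show "\<exists>s\<in>S. \<exists>r'. s * y = r' * r" by blast
next
  have S: "left_den S" using M by (rule maxDen_l_left_den)
  fix y assume "y * r \<in> ass S"
  then obtain s where s: "s \<in> S" "s * (y * r) = 0" unfolding ass_def by blast
  obtain s1 w where s1: "s1 \<in> S" "s1 * (s * y) = w * b" using left_den_ore[OF S \<open>b \<in> S\<close>] by blast
  have "w * (b * r) = s1 * (s * (y * r))" using s1(2) by (metis mult.assoc)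
  then have "w * (b * r) = 0" using s(2) by simp
  then obtain s2 where s2: "s2 \<in> S" "s2 * w = 0"
    using left_den_annihilator[OF S \<open>b * r \<in> S\<close>] by blast
  have "(s2 * s1 * s) * y = (s2 * w) * b" using s1(2) by (metis mult.assoc)
  then have "(s2 * s1 * s) * y = 0" using s2(2) by simp
  moreover have "s2 * s1 * s \<in> S" using left_den_mult[OF S] s s1 s2 by blast
  ultimately show "y \<in> ass S" unfolding ass_def by blast
qed

lemma unit_mem_maxDen_l:
  assumes M: "S \<in> maxDen_l" and "is_unit u"
  shows "u \<in> S"
proof (rule maxDen_l_memI[OF M])
  fix r
  have "1 * r = (r * unit_inv u) * u" using unit_inv_left[OF \<open>is_unit u\<close>] by (simp add: mult.assoc)
  then show "\<exists>s\<in>S. \<exists>r'. s * r = r' * u" using left_den_one[OF maxDen_l_left_den[OF M]] by blast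
next
  fix x assume "x * u \<in> ass S"
  then have "x * u * unit_inv u \<in> ass S" by (rule ass_mult_right)
  then show "x \<in> ass S" using unit_inv_right[OF \<open>is_unit u\<close>] by (simp add: mult.assoc)
qed

lemma left_den_Union_chain:
  assumes "C \<noteq> {}" and "\<And>X. X \<in> C \<Longrightarrow> left_den X"
    and chain: "\<And>X Y. X \<in> C \<Longrightarrow> Y \<in> C \<Longrightarrow> X \<subseteq> Y \<or> Y \<subseteq> X"
  shows "left_den (\<Union>C)"
proof (rule left_denI)
  show "1 \<in> \<Union>C" using assms(1,2) left_den_one by blast
  show "0 \<notin> \<Union>C" using assms(2) left_den_zero_notin by blast
next
  fix a b assume "a \<in> \<Union>C" "b \<in> \<Union>C"
  then obtain X Y where "X \<in> C" "Y \<in> C" "a \<in> X" "b \<in> Y" by blast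
  then show "a * b \<in> \<Union>C" using chain[of X Y] assms(2) left_den_mult by blast
next
  fix r s assume "s \<in> \<Union>C"
  then obtain X where "X \<in> C" "s \<in> X" by blast
  then show "\<exists>s'\<in>\<Union>C. \<exists>r'. s' * r = r' * s" using left_den_ore[OF assms(2)] by blast
next
  fix r s assume "s \<in> \<Union>C" "r * s = 0"
  then obtain X where "X \<in> C" "s \<in> X" by blast
  then show "\<exists>t\<in>\<Union>C. t * r = 0" using left_den_annihilator[OF assms(2)] \<open>r * s = 0\<close> by blast
qed

lemma ex_maxDen_l_superset:
  assumes "left_den S"
  shows "\<exists>M\<in>maxDen_l. S \<subseteq> M"
proof -
  let ?A = "{X. left_den X \<and> S \<subseteq> X}"
  have "\<exists>M\<in>?A. \<forall>X\<in>?A. M \<subseteq> X \<longrightarrow> X = M"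
  proof (rule subset_Zorn_nonempty)
    show "?A \<noteq> {}" using assms by blast
    fix C assume "C \<noteq> {}" and "subset.chain ?A C"
    then have CA: "C \<subseteq> ?A" and chain: "\<And>X Y. X \<in> C \<Longrightarrow> Y \<in> C \<Longrightarrow> X \<subseteq> Y \<or> Y \<subseteq> X"
      unfolding subset_chain_def by blast+
    have "left_den (\<Union>C)"
      using left_den_Union_chain[OF \<open>C \<noteq> {}\<close> _ chain] CA by blast
    moreover have "S \<subseteq> \<Union>C" using \<open>C \<noteq> {}\<close> CA by blast
    ultimately show "\<Union>C \<in> ?A" by blast
  qed
  then obtain M where M: "M \<in> ?A" and max: "\<forall>X\<in>?A. M \<subseteq> X \<longrightarrow> X = M"
    by blast
  have "M \<in> maxDen_l"
  proof (rule maxDen_lI)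
    show "left_den M" using M by blast
    show "S' \<subseteq> M" if "left_den S'" "M \<subseteq> S'" for S'
      using max M that by blast
  qed
  then show ?thesis using M by blast
qed

lemma left_den_subset_maxDen_l:
  assumes M: "S \<in> maxDen_l" and T: "left_den T" and ass_sub: "ass T \<subseteq> ass S"
  shows "T \<subseteq> S"
proof -
  have S: "left_den S" using M by (rule maxDen_l_left_den)
  define V where "V = monoid_gen (S \<union> T)"
  have SV: "S \<subseteq> V" and TV: "T \<subseteq> V" unfolding V_def by (auto intro: monoid_gen.gen)
  have T_cancel: "x \<in> ass S" if "t \<in> T" and "x * t \<in> ass S" for x t
  proof -
    obtain s where s: "s \<in> S" "(s * x) * t = 0" using \<open>x * t \<in> ass S\<close> by (auto simp: ass_def mult.assoc)
    then have "s * x \<in> ass T" using left_den_annihilator[OF T \<open>t \<in> T\<close>] unfolding ass_def by blast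
    then show ?thesis using ass_sub ass_left_cancel[OF S s(1)] by blast
  qed
  have "left_den V"
    unfolding V_def
  proof (rule left_den_monoid_gen[where I = "ass S"])
    show "\<exists>s\<in>monoid_gen (S \<union> T). \<exists>r'. s * r = r' * a" if "a \<in> S \<union> T" for a r
      using that left_den_ore[OF S] left_den_ore[OF T] SV TV unfolding V_def by blast
    show "\<exists>t\<in>monoid_gen (S \<union> T). t * r = 0" if "a \<in> S \<union> T" "r * a = 0" for a r
      using that left_den_annihilator[OF S] left_den_annihilator[OF T] SV TV unfolding V_def by blast
    show "x \<in> ass S" if "a \<in> S \<union> T" "x * a \<in> ass S" for a x
      using that ass_right_cancel[OF S] T_cancel by blast
  qed (use zero_in_ass[OF S] one_notin_ass[OF S] in auto)
  then have "V = S" using maxDen_l_eq[OF M] SV by blast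
  then show ?thesis using TV by blast
qed

lemma left_localization_left_den: "is_left_localization S l \<Longrightarrow> left_den S"
  by (simp add: is_left_localization_def)

lemma left_localization_hom: "is_left_localization S l \<Longrightarrow> is_ring_hom l"
  by (simp add: is_left_localization_def)

lemma left_localization_unit: "is_left_localization S l \<Longrightarrow> s \<in> S \<Longrightarrow> is_unit (l s)"
  by (simp add: is_left_localization_def)

lemma left_localization_fraction: "is_left_localization S l \<Longrightarrow> \<exists>s\<in>S. \<exists>r. l s * c = l r"
  by (simp add: is_left_localization_def)

lemma left_localization_kernel: "is_left_localization S l \<Longrightarrow> l r = 0 \<longleftrightarrow> r \<in> ass S"
  unfolding is_left_localization_def by blast

text \<open>\<open>localization_lift S l f c\<close> is \<open>f(s)\<^sup>-\<^sup>1 f(r)\<close> for any left fraction \<open>l(s) c = l(r)\<close>.\<close>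

definition localization_lift ::
    "'a::ring_1 set \<Rightarrow> ('a \<Rightarrow> 'c::ring_1) \<Rightarrow> ('a \<Rightarrow> 'e::ring_1) \<Rightarrow> 'c \<Rightarrow> 'e" where
  "localization_lift S l f c = (SOME y. \<exists>s\<in>S. \<exists>r. l s * c = l r \<and> f s * y = f r)"

context
  fixes S :: "'a::ring_1 set" and l :: "'a \<Rightarrow> 'c::ring_1" and f :: "'a \<Rightarrow> 'e::ring_1"
  assumes L: "is_left_localization S l" and f: "is_ring_hom f"
    and f_unit: "\<And>s. s \<in> S \<Longrightarrow> is_unit (f s)"
begin

text \<open>Two left fractions of the same element are brought to a common denominator by the
  Ore condition; their numerators then differ by an element of \<open>ass S\<close>, which \<open>f\<close> kills.\<close>

lemma localization_lift_welldefined: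
  assumes s: "s \<in> S" "l s * c = l r" and s0: "s0 \<in> S" "l s0 * c = l r0" and y: "f s0 * y = f r0"
  shows "f s * y = f r"
proof -
  have S: "left_den S" and l: "is_ring_hom l" using L left_localization_left_den left_localization_hom by blast+
  obtain a b where ab: "a \<in> S" "a * s = b * s0" using left_den_ore[OF S s0(1)] by blast
  have "l (a * r) = l (b * r0)"
  proof -
    have "l (a * r) = l (a * s) * c" using s(2) by (simp add: ring_hom_mult[OF l] mult.assoc)
    also have "\<dots> = l b * (l s0 * c)" using ab(2) by (simp add: ring_hom_mult[OF l] mult.assoc)
    also have "\<dots> = l (b * r0)" using s0(2) by (simp add: ring_hom_mult[OF l])
    finally show ?thesis .
  qed
  then have "l (a * r - b * r0) = 0" by (simp add: ring_hom_diff[OF l])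
  then have "a * r - b * r0 \<in> ass S" using left_localization_kernel[OF L] by blast
  then obtain e where e: "e \<in> S" "e * (a * r - b * r0) = 0" unfolding ass_def by blast
  then have "f e * f (a * r - b * r0) = f e * 0" by (simp add: ring_hom_mult[OF f, symmetric] ring_hom_zero[OF f])
  then have "f (a * r - b * r0) = 0" using is_unit_cancel_left[OF f_unit[OF e(1)]] by blast
  then have far: "f (a * r) = f (b * r0)" by (simp add: ring_hom_diff[OF f])
  have "f a * (f s * y) = f a * f r"
  proof -
    have "f a * (f s * y) = f (a * s) * y" by (simp add: ring_hom_mult[OF f] mult.assoc)
    also have "\<dots> = f b * (f s0 * y)" using ab(2) by (simp add: ring_hom_mult[OF f] mult.assoc)
    also have "\<dots> = f (a * r)" using y far by (simp add: ring_hom_mult[OF f])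
    finally show ?thesis by (simp add: ring_hom_mult[OF f])
  qed
  then show ?thesis using is_unit_cancel_left[OF f_unit[OF ab(1)]] by blast
qed

lemma localization_lift_fraction:
  assumes "s \<in> S" and "l s * c = l r"
  shows "f s * localization_lift S l f c = f r"
proof -
  obtain s0 r0 where s0: "s0 \<in> S" "l s0 * c = l r0" using left_localization_fraction[OF L] by blast
  have "f s0 * (unit_inv (f s0) * f r0) = f r0"
    using unit_inv_right[OF f_unit[OF s0(1)]] by (simp add: mult.assoc[symmetric])
  then have "\<exists>y. \<exists>s\<in>S. \<exists>r. l s * c = l r \<and> f s * y = f r" using s0 by blast
  then obtain s1 r1 where "s1 \<in> S" "l s1 * c = l r1" "f s1 * localization_lift S l f c = f r1"
    unfolding localization_lift_def by (rule someI_ex[THEN bexE]) blast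
  then show ?thesis using localization_lift_welldefined assms by blast
qed

lemma localization_lift_eq: "localization_lift S l f (l r) = f r"
  using localization_lift_fraction[of 1 "l r" r] left_den_one[OF left_localization_left_den[OF L]]
    ring_hom_one[OF left_localization_hom[OF L]] ring_hom_one[OF f]
  by simp

lemma localization_lift_add:
  "localization_lift S l f (c1 + c2) = localization_lift S l f c1 + localization_lift S l f c2"
  (is "?g (c1 + c2) = ?g c1 + ?g c2")
proof -
  have S: "left_den S" and l: "is_ring_hom l" using L left_localization_left_den left_localization_hom by blast+
  obtain s1 r1 where 1: "s1 \<in> S" "l s1 * c1 = l r1" using left_localization_fraction[OF L] by blast
  obtain s2 r2 where 2: "s2 \<in> S" "l s2 * c2 = l r2" using left_localization_fraction[OF L] by blast
  obtain a b where ab: "a \<in> S" "a * s1 = b * s2" using left_den_ore[OF S 2(1)] by blast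
  have as1: "a * s1 \<in> S" using left_den_mult[OF S ab(1) 1(1)] .
  have "l (a * s1) * (c1 + c2) = l (a * r1 + b * r2)"
  proof -
    have "l (a * s1) * (c1 + c2) = l a * (l s1 * c1) + l b * (l s2 * c2)"
      using ab(2) by (simp add: ring_hom_mult[OF l, symmetric] mult.assoc[symmetric] distrib_left)
    then show ?thesis using 1 2 by (simp add: ring_hom_mult[OF l] ring_hom_add[OF l])
  qed
  then have "f (a * s1) * ?g (c1 + c2) = f (a * r1 + b * r2)"
    using localization_lift_fraction[OF as1] by blast
  also have "\<dots> = f a * (f s1 * ?g c1) + f b * (f s2 * ?g c2)"
    using localization_lift_fraction[OF 1] localization_lift_fraction[OF 2]
    by (simp add: ring_hom_mult[OF f] ring_hom_add[OF f])
  also have "\<dots> = f (a * s1) * (?g c1 + ?g c2)"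
    using ab(2) by (simp add: ring_hom_mult[OF f, symmetric] mult.assoc[symmetric] distrib_left)
  finally show ?thesis using is_unit_cancel_left[OF f_unit[OF as1]] by blast
qed

lemma localization_lift_mult:
  "localization_lift S l f (c1 * c2) = localization_lift S l f c1 * localization_lift S l f c2"
  (is "?g (c1 * c2) = ?g c1 * ?g c2")
proof -
  have S: "left_den S" and l: "is_ring_hom l" using L left_localization_left_den left_localization_hom by blast+
  obtain s1 r1 where 1: "s1 \<in> S" "l s1 * c1 = l r1" using left_localization_fraction[OF L] by blast
  obtain s2 r2 where 2: "s2 \<in> S" "l s2 * c2 = l r2" using left_localization_fraction[OF L] by blast
  obtain a b where ab: "a \<in> S" "a * r1 = b * s2" using left_den_ore[OF S 2(1)] by blast
  have as1: "a * s1 \<in> S" using left_den_mult[OF S ab(1) 1(1)] .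
  have "l (a * s1) * (c1 * c2) = l (b * r2)"
  proof -
    have "l (a * s1) * (c1 * c2) = l a * (l s1 * c1) * c2" by (simp add: ring_hom_mult[OF l] mult.assoc)
    also have "\<dots> = l (a * r1) * c2" using 1(2) by (simp add: ring_hom_mult[OF l])
    also have "\<dots> = l (b * r2)" using ab(2) 2(2) by (simp add: ring_hom_mult[OF l] mult.assoc)
    finally show ?thesis .
  qed
  then have "f (a * s1) * ?g (c1 * c2) = f (b * r2)"
    using localization_lift_fraction[OF as1] by blast
  also have "\<dots> = f (a * r1) * ?g c2"
    using localization_lift_fraction[OF 2] ab(2) by (simp add: ring_hom_mult[OF f] mult.assoc)
  also have "\<dots> = f a * (f s1 * ?g c1) * ?g c2"
    using localization_lift_fraction[OF 1] by (simp add: ring_hom_mult[OF f])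
  also have "\<dots> = f (a * s1) * (?g c1 * ?g c2)" by (simp add: ring_hom_mult[OF f] mult.assoc)
  finally show ?thesis using is_unit_cancel_left[OF f_unit[OF as1]] by blast
qed

lemma ring_hom_localization_lift: "is_ring_hom (localization_lift S l f)"
  unfolding is_ring_hom_def
  using localization_lift_eq[of 1] localization_lift_add localization_lift_mult
    ring_hom_one[OF left_localization_hom[OF L]] ring_hom_one[OF f]
  by simp

end

lemma left_localization_endo_eq_id:
  assumes L: "is_left_localization S l" and g: "is_ring_hom g" and gl: "\<And>r. g (l r) = l r"
  shows "g c = c"
proof -
  obtain s r where sr: "s \<in> S" "l s * c = l r" using left_localization_fraction[OF L] by blast
  then have "l s * g c = l s * c" using gl ring_hom_mult[OF g, of "l s" c] by metis
  then show ?thesis using is_unit_cancel_left[OF left_localization_unit[OF L sr(1)]] by blast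
qed

lemma left_localizations_isomorphic:
  fixes l1 :: "'a::ring_1 \<Rightarrow> 'c::ring_1" and l2 :: "'a \<Rightarrow> 'd::ring_1"
  assumes L1: "is_left_localization S l1" and L2: "is_left_localization S l2"
  shows "\<exists>\<phi> :: 'c \<Rightarrow> 'd. is_ring_hom \<phi> \<and> bij \<phi>"
proof -
  define \<phi> where "\<phi> = localization_lift S l1 l2"
  define \<psi> where "\<psi> = localization_lift S l2 l1"
  have units: "\<And>s. s \<in> S \<Longrightarrow> is_unit (l1 s)" "\<And>s. s \<in> S \<Longrightarrow> is_unit (l2 s)"
    using left_localization_unit L1 L2 by blast+
  have hom: "is_ring_hom \<phi>" "is_ring_hom \<psi>" unfolding \<phi>_def \<psi>_def
    using ring_hom_localization_lift L1 L2 left_localization_hom units by blast+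
  have eq: "\<phi> (l1 r) = l2 r" "\<psi> (l2 r) = l1 r" for r unfolding \<phi>_def \<psi>_def
    using localization_lift_eq L1 L2 left_localization_hom units by blast+
  have "\<psi> (\<phi> c) = c" for c
    using left_localization_endo_eq_id[OF L1 ring_hom_comp[OF hom]] eq by simp
  moreover have "\<phi> (\<psi> d) = d" for d
    using left_localization_endo_eq_id[OF L2 ring_hom_comp[OF hom(2,1)]] eq by simp
  ultimately have "bij \<phi>" by (metis bijI' )
  then show ?thesis using hom by blast
qed

locale injective_left_localization =
  fixes T :: "'a::ring_1 set" and \<sigma> :: "'a \<Rightarrow> 'b::ring_1"
  assumes localization: "is_left_localization T \<sigma>" and ass_T: "ass T = {0}"
begin

lemma left_den_T: "left_den T"
  using localization by (rule left_localization_left_den)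

lemma \<sigma>_one: "\<sigma> 1 = 1"
  using ring_hom_one left_localization_hom[OF localization] .

lemma \<sigma>_zero: "\<sigma> 0 = 0"
  using ring_hom_zero left_localization_hom[OF localization] .

lemma \<sigma>_mult: "\<sigma> (x * y) = \<sigma> x * \<sigma> y"
  using ring_hom_mult left_localization_hom[OF localization] .

lemma \<sigma>_inject: "\<sigma> x = \<sigma> y \<longleftrightarrow> x = y"
proof
  assume "\<sigma> x = \<sigma> y"
  then have "\<sigma> (x - y) = 0" by (simp add: ring_hom_diff[OF left_localization_hom[OF localization]])
  then show "x = y" using left_localization_kernel[OF localization] ass_T by simp
qed simp

lemma \<sigma>_eq_zero_iff: "\<sigma> x = 0 \<longleftrightarrow> x = 0"
  using \<sigma>_inject[of x 0] \<sigma>_zero by simp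

lemma \<sigma>_unit: "t \<in> T \<Longrightarrow> is_unit (\<sigma> t)"
  using localization by (rule left_localization_unit)

lemma \<sigma>_fraction: "\<exists>t\<in>T. \<exists>r. \<sigma> t * q = \<sigma> r"
  using localization by (rule left_localization_fraction)

lemma eq_unit_inv_mult: "t \<in> T \<Longrightarrow> \<sigma> t * q = x \<Longrightarrow> q = unit_inv (\<sigma> t) * x"
  using unit_inv_left[OF \<sigma>_unit] by (metis mult.assoc mult_1_left)

definition fractions :: "'a set \<Rightarrow> 'b set" where
  "fractions S = {q. \<exists>t\<in>T. \<exists>s\<in>S. \<sigma> t * q = \<sigma> s}"

lemma \<sigma>_mem_fractions: "s \<in> S \<Longrightarrow> \<sigma> s \<in> fractions S"
  unfolding fractions_def using left_den_one[OF left_den_T] \<sigma>_one by force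

lemma fractions_subset_tilde: "fractions S \<subseteq> tilde T \<sigma> S"
proof
  fix q assume "q \<in> fractions S"
  then obtain t s where ts: "t \<in> T" "s \<in> S" "\<sigma> t * q = \<sigma> s" unfolding fractions_def by blast
  have "unit_inv (\<sigma> t) \<in> tilde T \<sigma> S"
    unfolding tilde_def using unit_inv[OF \<sigma>_unit[OF ts(1)]] ts(1) by (blast intro: monoid_gen.gen)
  moreover have "\<sigma> s \<in> tilde T \<sigma> S" unfolding tilde_def using ts(2) by (blast intro: monoid_gen.gen)
  ultimately show "q \<in> tilde T \<sigma> S"
    unfolding eq_unit_inv_mult[OF ts(1,3)] tilde_def by (rule monoid_gen.mult)
qed

lemma ass_fractions_iff: "\<sigma> r \<in> ass (fractions S) \<longleftrightarrow> r \<in> ass S"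
proof
  assume "\<sigma> r \<in> ass (fractions S)"
  then obtain w where w: "w \<in> fractions S" "w * \<sigma> r = 0" unfolding ass_def by blast
  then obtain t s where ts: "t \<in> T" "s \<in> S" "\<sigma> t * w = \<sigma> s" unfolding fractions_def by blast
  have "\<sigma> (s * r) = \<sigma> t * w * \<sigma> r" using ts(3) by (simp add: \<sigma>_mult)
  then have "\<sigma> (s * r) = \<sigma> 0" using w(2) by (simp add: mult.assoc \<sigma>_zero)
  then have "s * r = 0" using \<sigma>_inject by blast
  then show "r \<in> ass S" using ts(2) unfolding ass_def by blast
next
  assume "r \<in> ass S"
  then obtain s where s: "s \<in> S" "s * r = 0" unfolding ass_def by blast
  then have "\<sigma> s * \<sigma> r = 0" using \<sigma>_mult \<sigma>_zero by metis
  then show "\<sigma> r \<in> ass (fractions S)" using \<sigma>_mem_fractions[OF s(1)] unfolding ass_def by blast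
qed

lemma T_subset_maxDen_l:
  assumes "S \<in> maxDen_l"
  shows "T \<subseteq> S"
proof (rule left_den_subset_maxDen_l[OF assms left_den_T])
  show "ass T \<subseteq> ass S" using ass_T zero_in_ass[OF maxDen_l_left_den[OF assms]] by simp
qed

lemma fractions_mult:
  assumes M: "S \<in> maxDen_l" and "a \<in> fractions S" and "b \<in> fractions S"
  shows "a * b \<in> fractions S"
proof -
  have S: "left_den S" using M by (rule maxDen_l_left_den)
  obtain t1 s1 where 1: "t1 \<in> T" "s1 \<in> S" "\<sigma> t1 * a = \<sigma> s1"
    using \<open>a \<in> fractions S\<close> unfolding fractions_def by blast
  obtain t2 s2 where 2: "t2 \<in> T" "s2 \<in> S" "\<sigma> t2 * b = \<sigma> s2"
    using \<open>b \<in> fractions S\<close> unfolding fractions_def by blast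
  obtain t3 x where 3: "t3 \<in> T" "t3 * s1 = x * t2" using left_den_ore[OF left_den_T 2(1)] by blast
  have "t3 * s1 \<in> S" using left_den_mult[OF S _ 1(2)] T_subset_maxDen_l[OF M] 3(1) by blast
  then have "x * t2 \<in> S" using 3(2) by simp
  then have x: "x \<in> S" using maxDen_l_cancel_right[OF M] T_subset_maxDen_l[OF M] 2(1) by blast
  have "\<sigma> (t3 * t1) * (a * b) = \<sigma> (x * s2)"
  proof -
    have "\<sigma> (t3 * t1) * (a * b) = \<sigma> t3 * (\<sigma> t1 * a) * b" by (simp add: \<sigma>_mult mult.assoc)
    also have "\<dots> = \<sigma> (t3 * s1) * b" using 1 by (simp add: \<sigma>_mult)
    also have "\<dots> = \<sigma> x * (\<sigma> t2 * b)" using 3 by (simp add: \<sigma>_mult mult.assoc)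
    also have "\<dots> = \<sigma> (x * s2)" using 2 by (simp add: \<sigma>_mult)
    finally show ?thesis .
  qed
  moreover have "t3 * t1 \<in> T" using left_den_mult[OF left_den_T 3(1) 1(1)] .
  moreover have "x * s2 \<in> S" using left_den_mult[OF S x 2(2)] .
  ultimately show ?thesis unfolding fractions_def by blast
qed

lemma tilde_eq_fractions:
  assumes M: "S \<in> maxDen_l"
  shows "tilde T \<sigma> S = fractions S"
proof
  have one_S: "1 \<in> S" using left_den_one[OF maxDen_l_left_den[OF M]] .
  then have one: "1 \<in> fractions S" using \<sigma>_mem_fractions \<sigma>_one by metis
  have "u \<in> fractions S" if "t \<in> T" "\<sigma> t * u = 1" for t u
  proof -
    have "\<sigma> t * u = \<sigma> 1" using that(2) \<sigma>_one by simp
    then show ?thesis unfolding fractions_def using that(1) one_S by blast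
  qed
  then have "\<sigma> ` S \<union> {u. \<exists>t\<in>T. u * \<sigma> t = 1 \<and> \<sigma> t * u = 1} \<subseteq> fractions S"
    using \<sigma>_mem_fractions by blast
  then show "tilde T \<sigma> S \<subseteq> fractions S"
    unfolding tilde_def using one fractions_mult[OF M] by (rule monoid_gen_least)
qed (rule fractions_subset_tilde)

lemma vimage_fractions:
  assumes M: "S \<in> maxDen_l"
  shows "\<sigma> -` fractions S = S"
proof
  show "\<sigma> -` fractions S \<subseteq> S"
  proof
    fix r assume "r \<in> \<sigma> -` fractions S"
    then obtain t s where ts: "t \<in> T" "s \<in> S" "\<sigma> t * \<sigma> r = \<sigma> s" unfolding fractions_def by blast
    then have "t * r = s" using \<sigma>_inject \<sigma>_mult by metis
    then show "r \<in> S" using maxDen_l_cancel_left[OF M] T_subset_maxDen_l[OF M] ts(1,2) by blast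
  qed
  show "S \<subseteq> \<sigma> -` fractions S" using \<sigma>_mem_fractions by blast
qed

lemma left_den_vimage:
  assumes V: "left_den V" and TV: "\<sigma> ` T \<subseteq> V"
  shows "left_den (\<sigma> -` V)"
proof (rule left_denI)
  show "1 \<in> \<sigma> -` V" using left_den_one[OF V] \<sigma>_one by simp
  show "0 \<notin> \<sigma> -` V" using left_den_zero_notin[OF V] \<sigma>_zero by simp
next
  fix a b assume "a \<in> \<sigma> -` V" "b \<in> \<sigma> -` V"
  then show "a * b \<in> \<sigma> -` V" using left_den_mult[OF V] \<sigma>_mult by simp
next
  fix r a assume a: "a \<in> \<sigma> -` V"
  obtain v q where vq: "v \<in> V" "v * \<sigma> r = q * \<sigma> a" using left_den_ore[OF V] a by blast
  obtain t1 y where ty: "t1 \<in> T" "\<sigma> t1 * v = \<sigma> y" using \<sigma>_fraction by blast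
  obtain t2 z where tz: "t2 \<in> T" "\<sigma> t2 * (\<sigma> t1 * q) = \<sigma> z" using \<sigma>_fraction by blast
  have "\<sigma> (t2 * y * r) = \<sigma> (z * a)"
  proof -
    have "\<sigma> (t2 * y * r) = \<sigma> t2 * (\<sigma> t1 * (v * \<sigma> r))" using ty(2)[symmetric] by (simp add: \<sigma>_mult mult.assoc)
    also have "\<dots> = \<sigma> (z * a)" using vq(2) tz(2)[symmetric] by (simp add: \<sigma>_mult mult.assoc)
    finally show ?thesis .
  qed
  moreover have "t2 * y \<in> \<sigma> -` V"
  proof -
    have "\<sigma> y \<in> V" using ty TV vq left_den_mult[OF V] by (metis image_subset_iff)
    then show ?thesis using TV tz left_den_mult[OF V] \<sigma>_mult by (simp add: image_subset_iff)
  qed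
  ultimately show "\<exists>s'\<in>\<sigma> -` V. \<exists>r'. s' * r = r' * a" using \<sigma>_inject by blast
next
  fix r a assume a: "a \<in> \<sigma> -` V" and "r * a = 0"
  then have "\<sigma> r * \<sigma> a = 0" using \<sigma>_mult \<sigma>_zero by metis
  then obtain v where v: "v \<in> V" "v * \<sigma> r = 0" using left_den_annihilator[OF V] a by blast
  obtain t y where ty: "t \<in> T" "\<sigma> t * v = \<sigma> y" using \<sigma>_fraction by blast
  have "\<sigma> (y * r) = \<sigma> 0" using ty v by (metis mult.assoc mult_zero_right \<sigma>_zero \<sigma>_mult)
  then have "y * r = 0" using \<sigma>_inject by blast
  moreover have "\<sigma> y \<in> V" using ty TV v left_den_mult[OF V] by (metis image_subset_iff)
  ultimately show "\<exists>t\<in>\<sigma> -` V. t * r = 0" by blast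
qed

lemma fractions_ore:
  assumes M: "S \<in> maxDen_l" and "w \<in> fractions S"
  shows "\<exists>w'\<in>fractions S. \<exists>q'. w' * q = q' * w"
proof -
  have S: "left_den S" using M by (rule maxDen_l_left_den)
  obtain t s where ts: "t \<in> T" "s \<in> S" "\<sigma> t * w = \<sigma> s"
    using \<open>w \<in> fractions S\<close> unfolding fractions_def by blast
  obtain t1 r1 where tr: "t1 \<in> T" "\<sigma> t1 * q = \<sigma> r1" using \<sigma>_fraction by blast
  obtain s' r' where sr: "s' \<in> S" "s' * r1 = r' * s" using left_den_ore[OF S ts(2)] by blast
  have "\<sigma> (s' * t1) * q = (\<sigma> r' * \<sigma> t) * w"
  proof -
    have "\<sigma> (s' * t1) * q = \<sigma> (s' * r1)" using tr by (simp add: \<sigma>_mult mult.assoc)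
    also have "\<dots> = (\<sigma> r' * \<sigma> t) * w" using sr ts by (simp add: \<sigma>_mult mult.assoc)
    finally show ?thesis .
  qed
  moreover have "s' * t1 \<in> S" using left_den_mult[OF S] sr tr T_subset_maxDen_l[OF M] by blast
  ultimately show ?thesis using \<sigma>_mem_fractions by blast
qed

lemma fractions_annihilator:
  assumes M: "S \<in> maxDen_l" and "w \<in> fractions S" and "q * w = 0"
  shows "\<exists>w'\<in>fractions S. w' * q = 0"
proof -
  have S: "left_den S" using M by (rule maxDen_l_left_den)
  obtain t s where ts: "t \<in> T" "s \<in> S" "\<sigma> t * w = \<sigma> s"
    using \<open>w \<in> fractions S\<close> unfolding fractions_def by blast
  obtain t2 x where tx: "t2 \<in> T" "\<sigma> t2 * (q * unit_inv (\<sigma> t)) = \<sigma> x" using \<sigma>_fraction by blast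
  have "\<sigma> (x * s) = \<sigma> t2 * (q * w)"
    using tx(2)[symmetric] eq_unit_inv_mult[OF ts(1,3)] by (simp add: \<sigma>_mult mult.assoc)
  then have "x * s = 0" using \<open>q * w = 0\<close> by (simp add: \<sigma>_eq_zero_iff)
  then obtain s' where s': "s' \<in> S" "s' * x = 0" using left_den_annihilator[OF S ts(2)] by blast
  have "\<sigma> (s' * t2) * q = \<sigma> (s' * x) * \<sigma> t"
  proof -
    have "\<sigma> (s' * t2) * q = \<sigma> s' * (\<sigma> t2 * q * (unit_inv (\<sigma> t) * \<sigma> t))"
      using unit_inv_left[OF \<sigma>_unit[OF ts(1)]] by (simp add: \<sigma>_mult mult.assoc)
    also have "\<dots> = \<sigma> (s' * x) * \<sigma> t" using tx(2)[symmetric] by (simp add: \<sigma>_mult mult.assoc)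
    finally show ?thesis .
  qed
  then have "\<sigma> (s' * t2) * q = 0" using s'(2) \<sigma>_zero by simp
  moreover have "s' * t2 \<in> S" using left_den_mult[OF S] s' tx T_subset_maxDen_l[OF M] by blast
  ultimately show ?thesis using \<sigma>_mem_fractions by blast
qed

lemma left_den_fractions:
  assumes M: "S \<in> maxDen_l"
  shows "left_den (fractions S)"
proof (rule left_denI)
  have S: "left_den S" using M by (rule maxDen_l_left_den)
  show "1 \<in> fractions S" using \<sigma>_mem_fractions[OF left_den_one[OF S]] \<sigma>_one by simp
  show "0 \<notin> fractions S"
  proof
    assume "0 \<in> fractions S"
    then obtain t s where "s \<in> S" "\<sigma> t * 0 = \<sigma> s" unfolding fractions_def by blast
    then show False using \<sigma>_eq_zero_iff left_den_zero_notin[OF S] by auto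
  qed
next
  show "a * b \<in> fractions S" if "a \<in> fractions S" "b \<in> fractions S" for a b
    using fractions_mult[OF M that] .
  show "\<exists>w'\<in>fractions S. \<exists>q'. w' * q = q' * w" if "w \<in> fractions S" for q w
    using fractions_ore[OF M that] .
  show "\<exists>w'\<in>fractions S. w' * q = 0" if "w \<in> fractions S" "q * w = 0" for q w
    using fractions_annihilator[OF M that] .
qed

lemma fractions_maxDen_l:
  assumes M: "S \<in> maxDen_l"
  shows "fractions S \<in> maxDen_l"
proof (rule maxDen_lI[OF left_den_fractions[OF M]])
  fix V assume V: "left_den V" and sub: "fractions S \<subseteq> V"
  have TV: "\<sigma> ` T \<subseteq> V" using \<sigma>_mem_fractions T_subset_maxDen_l[OF M] sub by blast
  have vimage_V: "\<sigma> -` V = S"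
    using maxDen_l_eq[OF M left_den_vimage[OF V TV]] \<sigma>_mem_fractions sub by blast
  show "V \<subseteq> fractions S"
  proof
    fix v assume "v \<in> V"
    obtain t r where tr: "t \<in> T" "\<sigma> t * v = \<sigma> r" using \<sigma>_fraction by blast
    have "\<sigma> t * v \<in> V" using left_den_mult[OF V] TV tr(1) \<open>v \<in> V\<close> by blast
    then have "r \<in> S" using vimage_V tr(2) by auto
    then show "v \<in> fractions S" unfolding fractions_def using tr by blast
  qed
qed

lemma image_subset_maxDen_l: "\<T> \<in> maxDen_l \<Longrightarrow> \<sigma> ` T \<subseteq> \<T>"
  using unit_mem_maxDen_l \<sigma>_unit by blast

lemma tilde_vimage:
  assumes M: "\<T> \<in> maxDen_l"
  shows "tilde T \<sigma> (\<sigma> -` \<T>) = \<T>"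
proof
  have L: "left_den \<T>" using M by (rule maxDen_l_left_den)
  have "u \<in> \<T>" if "u * \<sigma> t = 1" "\<sigma> t * u = 1" for t u
    using unit_mem_maxDen_l[OF M] that unfolding is_unit_def by blast
  then have "\<sigma> ` (\<sigma> -` \<T>) \<union> {u. \<exists>t\<in>T. u * \<sigma> t = 1 \<and> \<sigma> t * u = 1} \<subseteq> \<T>" by blast
  then show "tilde T \<sigma> (\<sigma> -` \<T>) \<subseteq> \<T>"
    unfolding tilde_def using left_den_one[OF L] left_den_mult[OF L] by (rule monoid_gen_least)
  show "\<T> \<subseteq> tilde T \<sigma> (\<sigma> -` \<T>)"
  proof
    fix q assume "q \<in> \<T>"
    obtain t r where tr: "t \<in> T" "\<sigma> t * q = \<sigma> r" using \<sigma>_fraction by blast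
    have "\<sigma> t * q \<in> \<T>" using left_den_mult[OF L] image_subset_maxDen_l[OF M] tr(1) \<open>q \<in> \<T>\<close> by blast
    then have "q \<in> fractions (\<sigma> -` \<T>)" unfolding fractions_def using tr by auto
    then show "q \<in> tilde T \<sigma> (\<sigma> -` \<T>)" using fractions_subset_tilde by blast
  qed
qed

text \<open>A left denominator set strictly above \<open>\<sigma> -` \<T>\<close> would lie in a maximal \<open>M\<close> with
  \<open>\<T> \<subseteq> fractions M\<close>; maximality of \<open>\<T>\<close> forces equality, and then \<open>M = \<sigma> -` \<T>\<close>.\<close>

lemma vimage_maxDen_l:
  assumes M: "\<T> \<in> maxDen_l"
  shows "\<sigma> -` \<T> \<in> maxDen_l"
proof (rule maxDen_lI)
  show "left_den (\<sigma> -` \<T>)"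
    using left_den_vimage[OF maxDen_l_left_den[OF M] image_subset_maxDen_l[OF M]] .
  fix S' assume "left_den S'" and sub: "\<sigma> -` \<T> \<subseteq> S'"
  obtain N where N: "N \<in> maxDen_l" "S' \<subseteq> N" using ex_maxDen_l_superset[OF \<open>left_den S'\<close>] by blast
  have "tilde T \<sigma> (\<sigma> -` \<T>) \<subseteq> tilde T \<sigma> N"
    unfolding tilde_def using sub N(2) by (intro monoid_gen_mono) blast
  then have "\<T> \<subseteq> fractions N" using tilde_vimage[OF M] tilde_eq_fractions[OF N(1)] by simp
  then have "fractions N = \<T>" using maxDen_l_eq[OF M left_den_fractions[OF N(1)]] by blast
  then have "N = \<sigma> -` \<T>" using vimage_fractions[OF N(1)] by simp
  then show "S' \<subseteq> \<sigma> -` \<T>" using N(2) by simp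
qed

lemma left_localization_comp:
  fixes \<sigma>2 :: "'b \<Rightarrow> 'd::ring_1"
  assumes M: "S \<in> maxDen_l" and L2: "is_left_localization (tilde T \<sigma> S) \<sigma>2"
  shows "is_left_localization S (\<sigma>2 \<circ> \<sigma>)"
proof -
  have L2': "is_left_localization (fractions S) \<sigma>2" using L2 tilde_eq_fractions[OF M] by simp
  have h2: "is_ring_hom \<sigma>2" using left_localization_hom[OF L2'] .
  have fraction: "\<exists>s\<in>S. \<exists>r. (\<sigma>2 \<circ> \<sigma>) s * d = (\<sigma>2 \<circ> \<sigma>) r" for d
  proof -
    obtain w q where wq: "w \<in> fractions S" "\<sigma>2 w * d = \<sigma>2 q"
      using left_localization_fraction[OF L2'] by blast
    obtain t s where ts: "t \<in> T" "s \<in> S" "\<sigma> t * w = \<sigma> s" using wq(1) unfolding fractions_def by blast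
    obtain t1 r where tr: "t1 \<in> T" "\<sigma> t1 * (\<sigma> t * q) = \<sigma> r" using \<sigma>_fraction by blast
    have "\<sigma>2 (\<sigma> (t1 * s)) * d = \<sigma>2 (\<sigma> t1 * \<sigma> t) * (\<sigma>2 w * d)"
      using ts(3)[symmetric] by (simp add: \<sigma>_mult ring_hom_mult[OF h2] mult.assoc)
    also have "\<dots> = \<sigma>2 (\<sigma> r)"
      using wq(2) tr(2)[symmetric] by (simp add: ring_hom_mult[OF h2] mult.assoc)
    finally have "(\<sigma>2 \<circ> \<sigma>) (t1 * s) * d = (\<sigma>2 \<circ> \<sigma>) r" by simp
    moreover have "t1 * s \<in> S"
      using left_den_mult[OF maxDen_l_left_den[OF M]] T_subset_maxDen_l[OF M] tr(1) ts(2) by blast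
    ultimately show ?thesis by blast
  qed
  have kernel: "(\<sigma>2 \<circ> \<sigma>) r = 0 \<longleftrightarrow> r \<in> ass S" for r
    using left_localization_kernel[OF L2'] ass_fractions_iff by simp
  show ?thesis
    unfolding is_left_localization_def
  proof (intro conjI ballI allI)
    show "left_den S" using M by (rule maxDen_l_left_den)
    show "is_ring_hom (\<sigma>2 \<circ> \<sigma>)"
      using ring_hom_comp[OF left_localization_hom[OF localization] h2] .
    show "is_unit ((\<sigma>2 \<circ> \<sigma>) s)" if "s \<in> S" for s
      using left_localization_unit[OF L2' \<sigma>_mem_fractions[OF that]] by simp
    show "\<exists>s\<in>S. \<exists>r. (\<sigma>2 \<circ> \<sigma>) s * d = (\<sigma>2 \<circ> \<sigma>) r" for d by (rule fraction)
    show "{r. (\<sigma>2 \<circ> \<sigma>) r = 0} = ass S" using kernel by blast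
  qed
qed

end

theorem theorem3p11:
  fixes T :: "'a::ring_1 set" and \<sigma> :: "'a \<Rightarrow> 'b::ring_1"
  assumes "left_den T" and "ass T = {0}"
    and "is_left_localization T \<sigma>"
  shows "(\<forall>S\<in>maxDen_l. T \<subseteq> S)
    \<and> bij_betw (tilde T \<sigma>) (maxDen_l :: 'a set set) (maxDen_l :: 'b set set)
    \<and> (\<forall>S\<in>(maxDen_l :: 'a set set). \<sigma> -` (tilde T \<sigma> S) = S)
    \<and> (\<forall>\<T>\<in>(maxDen_l :: 'b set set). \<sigma> -` \<T> \<in> maxDen_l \<and> tilde T \<sigma> (\<sigma> -` \<T>) = \<T>)
    \<and> (\<forall>S\<in>(maxDen_l :: 'a set set). \<forall>(\<sigma>1 :: 'a \<Rightarrow> 'c::ring_1) (\<sigma>2 :: 'b \<Rightarrow> 'd::ring_1).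
         is_left_localization S \<sigma>1 \<longrightarrow> is_left_localization (tilde T \<sigma> S) \<sigma>2 \<longrightarrow>
         (\<exists>\<phi> :: 'c \<Rightarrow> 'd. is_ring_hom \<phi> \<and> bij \<phi>))"
proof -
  \<comment> \<open>\<open>left_den T\<close> is already part of \<open>is_left_localization T \<sigma>\<close>.\<close>
  interpret injective_left_localization T \<sigma>
    using assms(2,3) by unfold_locales
  have left_inverse: "\<forall>S\<in>(maxDen_l :: 'a set set). \<sigma> -` (tilde T \<sigma> S) = S"
    using tilde_eq_fractions vimage_fractions by simp
  have right_inverse: "\<forall>\<T>\<in>(maxDen_l :: 'b set set). \<sigma> -` \<T> \<in> maxDen_l \<and> tilde T \<sigma> (\<sigma> -` \<T>) = \<T>"
    using vimage_maxDen_l tilde_vimage by blast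
  have "bij_betw (tilde T \<sigma>) (maxDen_l :: 'a set set) (maxDen_l :: 'b set set)"
  proof (rule bij_betw_byWitness[where f' = "vimage \<sigma>"])
    show "tilde T \<sigma> ` maxDen_l \<subseteq> maxDen_l"
      using tilde_eq_fractions fractions_maxDen_l by auto
  qed (use left_inverse right_inverse in auto)
  moreover have "\<forall>S\<in>(maxDen_l :: 'a set set). \<forall>(\<sigma>1 :: 'a \<Rightarrow> 'c::ring_1) (\<sigma>2 :: 'b \<Rightarrow> 'd::ring_1).
      is_left_localization S \<sigma>1 \<longrightarrow> is_left_localization (tilde T \<sigma> S) \<sigma>2 \<longrightarrow>
      (\<exists>\<phi> :: 'c \<Rightarrow> 'd. is_ring_hom \<phi> \<and> bij \<phi>)"
    using left_localizations_isomorphic left_localization_comp by blast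
  ultimately show ?thesis using T_subset_maxDen_l left_inverse right_inverse by blast
qed

end
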